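(* Let $a^*=(a^*_1,\dots,a^*_n)\in A$ be an aggregate strong Nash equilibrium of the $n$-player objective game $G$. Then $a^*$ is stable under perfect observability, i.e. there exist $\mu\in\mathcal M(\Theta^n)$ and a stable configuration $(\mu,b)$ whose aggregate outcome is the point mass at $a^*$.
   Context: Objective game: $G=(N,A,\pi)$ is a finite $n$-player normal-form game, $N=\{1,\dots,n\}$, finite action sets $A_i$, $A=\prod_{i\in N}A_i$, material payoff (fitness) functions $\pi_i:A\to\mathbb{R}$, extended multilinearly to mixed profiles in $\prod_{i}\Delta(A_i)$; $\pi=(\pi_1,\dots,\pi_n)$. A strategy profile $x\in\prod_i\Delta(A_i)$ is an aggregate strong Nash equilibrium if for every $J\subseteq N$ and every $\sigma_J\in\prod_{j\in J}\Delta(A_j)$ with $\sigma_j\neq x_j$ for some $j\in J$, $\sum_{j\in J}\pi_j(x)>\sum_{j\in J}\pi_j(\sigma_J,x_{-J})$. Preference types: $\Theta=\mathbb{R}^A$ (utility functions on $A$, extended multilinearly to mixed profiles). $\mathcal{M}(\Theta^n)$ is the set of product distributions $\mu=\mu_1\times\dots\times\mu_n$ on $\Theta^n$ with each $\mu_i$ finitely supported; $\operatorname{supp}\mu=\prod_i\operatorname{supp}\mu_i$, $\mu(\theta)=\prod_i\mu_i(\theta_i)$, $\mu_{-i}(\theta_{-i})=\prod_{j\neq i}\mu_j(\theta_j)$. Mutants: for nonempty $J\subseteq N$, a mutant sub-profile is $\tilde\theta_J\in\prod_{j\in J}(\Theta\setminus\operatorname{supp}\mu_j)$ with shares $\varepsilon=(\varepsilon_j)_{j\in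 J}\in(0,1)^{|J|}$, $\|\varepsilon\|=\max_j\varepsilon_j$; the post-entry distribution $\tilde\mu^\varepsilon$ has $\tilde\mu^\varepsilon_i=(1-\varepsilon_i)\mu_i+\varepsilon_i\delta_{\tilde\theta_i}$ for $i\in J$ and $\tilde\mu^\varepsilon_i=\mu_i$ otherwise. Perfect observability: for $\mu\in\mathcal M(\Theta^n)$, an equilibrium is a map $b:\operatorname{supp}\mu\to\prod_i\Delta(A_i)$ such that for each $\theta$, $b(\theta)$ is a Nash equilibrium of the normal-form game with action sets $A_i$ and payoffs $\theta_1,\dots,\theta_n$; $B_1(\mu)$ is the set of these; $(\mu,b)$ with $b\in B_1(\mu)$ is a configuration, with aggregate outcome $\varphi_{\mu,b}(a)=\sum_{\theta\in\operatorname{supp}\mu}\mu(\theta)\prod_{i}b_i(\theta)(a_i)$. Average fitness of $\theta_i\in\operatorname{supp}\mu_i$: $\Pi_{\theta_i}(\mu;b)=\sum_{\theta'_{-i}\in\operatorname{supp}\mu_{-i}}\mu_{-i}(\theta'_{-i})\pi_i(b(\theta_i,\theta'_{-i}))$. $(\mu,b)$ is balanced if for each $i$ all types in $\operatorname{supp}\mu_i$ have equal average fitness. Focal set: $B_1(\tilde\mu^\varepsilon;b)=\{\tilde b\in B_1(\tilde\mu^\varepsilon):\tilde b(\theta)=b(\theta)\ \forall\theta\in\operatorname{supp}\mu\}$. $(\mu,b)$ is stable if it is balanced and for every nonempty $J\subseteq N$ and every mutant sub-profile $\tilde\theta_J$ there is $\bar\epsilon\in(0,1)$ such that for every $\varepsilon\in(0,1)^{|J|}$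 with $\|\varepsilon\|<\bar\epsilon$ and every $\tilde b\in B_1(\tilde\mu^\varepsilon;b)$, either (i) there is $j\in J$ with $\Pi_{\theta_j}(\tilde\mu^\varepsilon;\tilde b)>\Pi_{\tilde\theta_j}(\tilde\mu^\varepsilon;\tilde b)$ for all $\theta_j\in\operatorname{supp}\mu_j$, or (ii) for every $i\in N$ all types in $\operatorname{supp}\tilde\mu^\varepsilon_i$ have equal average fitness under $(\tilde\mu^\varepsilon,\tilde b)$. *)

theory Defs
  imports Complex_Main "HOL-Library.FuncSet"
begin

text \<open>Players are the elements of a finite type 'i (the player set N is UNIV).
  A preference type is a utility function on pure profiles, normalised to 0
  outside A (so that types are exactly elements of R^A).\<close>

type_synonym ('i, 'a) ptype = "('i \<Rightarrow> 'a) \<Rightarrow> real"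

definition profiles :: "('i \<Rightarrow> 'a set) \<Rightarrow> ('i \<Rightarrow> 'a) set" where
  "profiles Act = Pi\<^sub>E UNIV Act"

definition Types :: "('i \<Rightarrow> 'a set) \<Rightarrow> ('i, 'a) ptype set" where
  "Types Act = {u. \<forall>a. a \<notin> profiles Act \<longrightarrow> u a = 0}"

definition mixed :: "('i \<Rightarrow> 'a set) \<Rightarrow> 'i \<Rightarrow> ('a \<Rightarrow> real) \<Rightarrow> bool" where
  "mixed Act i s \<longleftrightarrow> (\<forall>x. 0 \<le> s x) \<and> (\<forall>x. x \<notin> Act i \<longrightarrow> s x = 0) \<and> sum s (Act i) = 1"

definition mixed_profile :: "('i \<Rightarrow> 'a set) \<Rightarrow> ('i \<Rightarrow> 'a \<Rightarrow> real) \<Rightarrow> bool" where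
  "mixed_profile Act x \<longleftrightarrow> (\<forall>i. mixed Act i (x i))"

definition EU :: "('i::finite \<Rightarrow> 'a set) \<Rightarrow> (('i \<Rightarrow> 'a) \<Rightarrow> real) \<Rightarrow> ('i \<Rightarrow> 'a \<Rightarrow> real) \<Rightarrow> real" where
  "EU Act u x = (\<Sum>a\<in>profiles Act. (\<Prod>i\<in>UNIV. x i (a i)) * u a)"

definition pure :: "('i \<Rightarrow> 'a) \<Rightarrow> ('i \<Rightarrow> 'a \<Rightarrow> real)" where
  "pure a = (\<lambda>i y. if y = a i then 1 else 0)"

definition aggregate_strong_NE ::
  "('i::finite \<Rightarrow> 'a set) \<Rightarrow> ('i \<Rightarrow> ('i \<Rightarrow> 'a) \<Rightarrow> real) \<Rightarrow> ('i \<Rightarrow> 'a \<Rightarrow> real) \<Rightarrow> bool" where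
  "aggregate_strong_NE Act \<pi> x \<longleftrightarrow> mixed_profile Act x \<and>
     (\<forall>J \<sigma>. (\<forall>j\<in>J. mixed Act j (\<sigma> j)) \<and> (\<exists>j\<in>J. \<sigma> j \<noteq> x j) \<longrightarrow>
        (\<Sum>j\<in>J. EU Act (\<pi> j) x) > (\<Sum>j\<in>J. EU Act (\<pi> j) (\<lambda>i. if i \<in> J then \<sigma> i else x i)))"

definition is_NE :: "('i::finite \<Rightarrow> 'a set) \<Rightarrow> ('i \<Rightarrow> ('i \<Rightarrow> 'a) \<Rightarrow> real) \<Rightarrow> ('i \<Rightarrow> 'a \<Rightarrow> real) \<Rightarrow> bool" where
  "is_NE Act u x \<longleftrightarrow> mixed_profile Act x \<and>
     (\<forall>i s. mixed Act i s \<longrightarrow> EU Act (u i) (x(i := s)) \<le> EU Act (u i) x)"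

definition supp :: "('b \<Rightarrow> real) \<Rightarrow> 'b set" where
  "supp w = {t. w t \<noteq> 0}"

definition type_dist :: "('i \<Rightarrow> 'a set) \<Rightarrow> (('i, 'a) ptype \<Rightarrow> real) \<Rightarrow> bool" where
  "type_dist Act w \<longleftrightarrow> (\<forall>t. 0 \<le> w t) \<and> finite (supp w) \<and> supp w \<subseteq> Types Act \<and> sum w (supp w) = 1"

text \<open>Element of M(Theta^n): a product distribution, given by its marginals.\<close>
definition pop_dist :: "('i \<Rightarrow> 'a set) \<Rightarrow> ('i \<Rightarrow> ('i, 'a) ptype \<Rightarrow> real) \<Rightarrow> bool" where
  "pop_dist Act \<mu> \<longleftrightarrow> (\<forall>i. type_dist Act (\<mu> i))"

definition suppP :: "('i \<Rightarrow> ('i, 'a) ptype \<Rightarrow> real) \<Rightarrow> ('i \<Rightarrow> ('i, 'a) ptype) set" where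
  "suppP \<mu> = Pi\<^sub>E UNIV (\<lambda>i. supp (\<mu> i))"

definition B1 :: "('i::finite \<Rightarrow> 'a set) \<Rightarrow> ('i \<Rightarrow> ('i, 'a) ptype \<Rightarrow> real)
    \<Rightarrow> (('i \<Rightarrow> ('i, 'a) ptype) \<Rightarrow> 'i \<Rightarrow> 'a \<Rightarrow> real) \<Rightarrow> bool" where
  "B1 Act \<mu> b \<longleftrightarrow> (\<forall>\<theta>\<in>suppP \<mu>. is_NE Act \<theta> (b \<theta>))"

definition configuration where
  "configuration Act \<mu> b \<longleftrightarrow> pop_dist Act \<mu> \<and> B1 Act \<mu> b"

definition outcome :: "('i::finite \<Rightarrow> ('i, 'a) ptype \<Rightarrow> real)
    \<Rightarrow> (('i \<Rightarrow> ('i, 'a) ptype) \<Rightarrow> 'i \<Rightarrow> 'a \<Rightarrow> real) \<Rightarrow> ('i \<Rightarrow> 'a) \<Rightarrow> real" where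
  "outcome \<mu> b a = (\<Sum>\<theta>\<in>suppP \<mu>. (\<Prod>i\<in>UNIV. \<mu> i (\<theta> i)) * (\<Prod>i\<in>UNIV. b \<theta> i (a i)))"

definition fitness :: "('i::finite \<Rightarrow> 'a set) \<Rightarrow> ('i \<Rightarrow> ('i \<Rightarrow> 'a) \<Rightarrow> real)
    \<Rightarrow> ('i \<Rightarrow> ('i, 'a) ptype \<Rightarrow> real) \<Rightarrow> (('i \<Rightarrow> ('i, 'a) ptype) \<Rightarrow> 'i \<Rightarrow> 'a \<Rightarrow> real)
    \<Rightarrow> 'i \<Rightarrow> ('i, 'a) ptype \<Rightarrow> real" where
  "fitness Act \<pi> \<mu> b i t =
     (\<Sum>\<theta>\<in>Pi\<^sub>E UNIV (\<lambda>j. if j = i then {t} else supp (\<mu> j)).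
        (\<Prod>j\<in>UNIV - {i}. \<mu> j (\<theta> j)) * EU Act (\<pi> i) (b \<theta>))"

definition balanced where
  "balanced Act \<pi> \<mu> b \<longleftrightarrow>
     (\<forall>i. \<forall>t\<in>supp (\<mu> i). \<forall>t'\<in>supp (\<mu> i). fitness Act \<pi> \<mu> b i t = fitness Act \<pi> \<mu> b i t')"

definition post_entry :: "('i \<Rightarrow> ('i, 'a) ptype \<Rightarrow> real) \<Rightarrow> 'i set \<Rightarrow> ('i \<Rightarrow> ('i, 'a) ptype)
    \<Rightarrow> ('i \<Rightarrow> real) \<Rightarrow> ('i \<Rightarrow> ('i, 'a) ptype \<Rightarrow> real)" where
  "post_entry \<mu> J tm eps = (\<lambda>i t. if i \<in> J
      then (1 - eps i) * \<mu> i t + eps i * (if t = tm i then 1 else 0) else \<mu> i t)"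

definition stable where
  "stable Act \<pi> \<mu> b \<longleftrightarrow> balanced Act \<pi> \<mu> b \<and>
    (\<forall>J tm. J \<noteq> {} \<and> (\<forall>j\<in>J. tm j \<in> Types Act - supp (\<mu> j)) \<longrightarrow>
      (\<exists>ebar. 0 < ebar \<and> ebar < 1 \<and>
        (\<forall>eps. (\<forall>j\<in>J. 0 < eps j \<and> eps j < ebar) \<longrightarrow>
          (\<forall>b'. B1 Act (post_entry \<mu> J tm eps) b' \<and> (\<forall>\<theta>\<in>suppP \<mu>. b' \<theta> = b \<theta>) \<longrightarrow>
             (\<exists>j\<in>J. \<forall>t\<in>supp (\<mu> j).
                 fitness Act \<pi> (post_entry \<mu> J tm eps) b' j t
               > fitness Act \<pi> (post_entry \<mu> J tm eps) b' j (tm j))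
             \<or> balanced Act \<pi> (post_entry \<mu> J tm eps) b'))))"

end

theory Submission
  imports Defs
begin

text \<open>Give every player i a single type, committed to a*: its utility is 1 exactly when i plays
  a*_i, so it plays a*_i in every equilibrium whatever its opponents' types. The monomorphic
  population of these types therefore yields a* and is trivially balanced. After mutants enter
  in a set J of roles, let h_i(K) be player i's fitness loss relative to a* in a match in which
  exactly the roles in K \<subseteq> J are taken by mutants, and d(K) the probability that the match does
  not end in a*. The incumbents outside K still play a*, so the aggregate strong Nash property
  gives c d(K) \<le> \<Sum>_{i\<in>K} h_i(K) for a uniform c > 0, while h_i(K) \<le> M d(K) trivially.
  Weighting the fitness disadvantage of the mutant in role i by its share, the first bound
  dominates the second once all shares are small; hence the weighted sum of the disadvantages
  is nonnegative, so either some mutant is strictly worse than its incumbent or all fitnesses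
  agree.\<close>

section \<open>Multilinear extension\<close>

lemma finite_profiles:
  assumes "\<And>i. finite (Act i)"
  shows "finite (profiles (Act :: 'i::finite \<Rightarrow> 'a set))"
  unfolding profiles_def by (simp add: assms finite_PiE)

lemma sum_prod_profiles:
  assumes "\<And>i. finite (Act i)"
  shows "(\<Sum>a\<in>profiles Act. \<Prod>i\<in>(UNIV::'i::finite set). (f i (a i)::real)) = (\<Prod>i\<in>UNIV. \<Sum>y\<in>Act i. f i y)"
  using prod_sum_PiE[of UNIV Act f] assms by (simp add: profiles_def)

lemma prod_fun_upd_remove:
  fixes x :: "'i::finite \<Rightarrow> 'a \<Rightarrow> real"
  shows "(\<Prod>k\<in>UNIV. (x(i := h)) k (a k)) = h (a i) * (\<Prod>k\<in>UNIV-{i}. x k (a k))"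
proof -
  have "(\<Prod>k\<in>UNIV. (x(i := h)) k (a k)) = h (a i) * (\<Prod>k\<in>UNIV-{i}. (x(i := h)) k (a k))"
    using prod.remove[of UNIV i "\<lambda>k. (x(i:=h)) k (a k)"] by simp
  also have "(\<Prod>k\<in>UNIV-{i}. (x(i := h)) k (a k)) = (\<Prod>k\<in>UNIV-{i}. x k (a k))"
    by (rule prod.cong) auto
  finally show ?thesis .
qed

lemma EU_marginal:
  assumes fin: "\<And>i. finite (Act i)" and mp: "mixed_profile Act x"
  shows "(\<Sum>a\<in>profiles Act. (\<Prod>k\<in>(UNIV::'i::finite set). x k (a k)) * f (a i)) = (\<Sum>y\<in>Act i. x i y * f y)"
proof -
  define h where "h = (\<lambda>y. x i y * f y)"
  have "\<And>a. (\<Prod>k\<in>UNIV. x k (a k)) * f (a i) = (\<Prod>k\<in>UNIV. (x(i := h)) k (a k))"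
    using prod_fun_upd_remove[of x i "x i"] prod_fun_upd_remove[of x i h] by (simp add: h_def)
  hence "(\<Sum>a\<in>profiles Act. (\<Prod>k\<in>UNIV. x k (a k)) * f (a i)) = (\<Prod>k\<in>UNIV. \<Sum>y\<in>Act k. (x(i := h)) k y)"
    using sum_prod_profiles[OF fin, of "x(i:=h)"] by simp
  also have "\<dots> = (\<Sum>y\<in>Act i. h y) * (\<Prod>k\<in>UNIV-{i}. \<Sum>y\<in>Act k. (x(i := h)) k y)"
    using prod.remove[of UNIV i "\<lambda>k. \<Sum>y\<in>Act k. (x(i := h)) k y"] by simp
  also have "(\<Prod>k\<in>UNIV-{i}. \<Sum>y\<in>Act k. (x(i := h)) k y) = (\<Prod>k\<in>UNIV-{i}. \<Sum>y\<in>Act k. x k y)"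
    by (rule prod.cong) auto
  also have "(\<Prod>k\<in>UNIV-{i}. \<Sum>y\<in>Act k. x k y) = 1"
    using mp by (simp add: mixed_profile_def mixed_def)
  finally show ?thesis by (simp add: h_def)
qed

lemma prod_pure: "(\<Prod>i\<in>(UNIV::'i::finite set). pure a i (a' i)) = (if a' = a then 1 else 0)"
proof (cases "a' = a")
  case False
  then obtain i where "a' i \<noteq> a i" by auto
  hence "pure a i (a' i) = 0" by (simp add: pure_def)
  thus ?thesis using False by (metis finite UNIV_I prod_zero)
qed (simp add: pure_def)

lemma EU_pure:
  assumes "a \<in> profiles Act" "\<And>i. finite (Act i)"
  shows "EU Act u (pure a) = u a"
proof -
  have "EU Act u (pure a) = (\<Sum>a'\<in>profiles Act. if a' = a then u a else 0)"
    unfolding EU_def by (rule sum.cong) (auto simp: prod_pure)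
  thus ?thesis using assms finite_profiles[of Act] by simp
qed

lemma mixed_pure:
  assumes "a \<in> profiles Act" "finite (Act i)"
  shows "mixed Act i (pure a i)"
proof -
  have ai: "a i \<in> Act i" using assms(1) by (auto simp: profiles_def)
  hence "sum (\<lambda>y. if y = a i then 1 else 0) (Act i) = (1::real)"
    using assms(2) by (simp add: sum.delta')
  thus ?thesis using ai by (auto simp: mixed_def pure_def)
qed

lemma mixed_profile_pure:
  assumes "a \<in> profiles Act" "\<And>i. finite (Act i)"
  shows "mixed_profile Act (pure a)"
  unfolding mixed_profile_def using mixed_pure[OF assms(1) assms(2)] by blast

lemma mixed_le_one:
  assumes "mixed Act i s" "finite (Act i)"
  shows "s y \<le> 1"
proof (cases "y \<in> Act i")
  case True
  have "s y \<le> sum s (Act i)" using assms True by (intro member_le_sum) (auto simp: mixed_def)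
  thus ?thesis using assms by (simp add: mixed_def)
qed (use assms in \<open>auto simp: mixed_def\<close>)

lemma mixed_eq_pure_if_one:
  assumes mi: "mixed Act i s" and fin: "finite (Act i)" and ai: "a i \<in> Act i"
    and one: "s (a i) = 1"
  shows "s = pure a i"
proof
  fix y
  show "s y = pure a i y"
  proof (cases "y \<noteq> a i \<and> y \<in> Act i")
    case True
    have "s (a i) + s y = sum s {a i, y}" using True by auto
    also have "\<dots> \<le> sum s (Act i)"
      using mi True ai fin by (intro sum_mono2) (auto simp: mixed_def)
    finally have "s y \<le> 0" using mi one by (simp add: mixed_def)
    thus ?thesis using mi True by (auto simp: mixed_def pure_def intro: antisym)
  qed (use mi one in \<open>auto simp: mixed_def pure_def\<close>)
qed

lemma mixed_profile_sum_one:
  assumes "\<And>i. finite (Act i)" "mixed_profile Act x"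
  shows "(\<Sum>a\<in>profiles Act. \<Prod>i\<in>(UNIV::'i::finite set). x i (a i)) = 1"
  using assms by (simp add: sum_prod_profiles mixed_profile_def mixed_def)

lemma prod_mixed_nonneg: "mixed_profile Act x \<Longrightarrow> 0 \<le> (\<Prod>k\<in>UNIV. x k (a k))"
  by (intro prod_nonneg) (auto simp: mixed_profile_def mixed_def)

lemma EU_loss_eq:
  assumes fin: "\<And>i. finite (Act i)" and mp: "mixed_profile Act x"
  shows "u astar - EU Act u x = (\<Sum>a\<in>profiles Act. (\<Prod>k\<in>UNIV. x k (a k)) * (u astar - u a))"
proof -
  have "(\<Sum>a\<in>profiles Act. (\<Prod>k\<in>UNIV. x k (a k)) * u astar) = u astar"
    using mixed_profile_sum_one[OF fin mp] by (simp add: sum_distrib_right[symmetric])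
  thus ?thesis by (simp add: EU_def sum_subtractf right_diff_distrib)
qed

section \<open>Commitment types and coalitional gains\<close>

definition commit_type :: "('i \<Rightarrow> 'a set) \<Rightarrow> ('i \<Rightarrow> 'a) \<Rightarrow> 'i \<Rightarrow> ('i, 'a) ptype" where
  "commit_type Act astar i = (\<lambda>a. if a \<in> profiles Act \<and> a i = astar i then 1 else 0)"

lemma commit_type_in_Types: "commit_type Act astar i \<in> Types Act"
  by (simp add: commit_type_def Types_def)

lemma EU_commit_type:
  assumes fin: "\<And>i. finite (Act i)" and mp: "mixed_profile Act x" and ai: "astar i \<in> Act i"
  shows "EU Act (commit_type Act astar i) x = x i (astar i)"
proof -
  have "EU Act (commit_type Act astar i) x
      = (\<Sum>a\<in>profiles Act. (\<Prod>k\<in>UNIV. x k (a k)) * (\<lambda>y. if y = astar i then 1 else 0) (a i))"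
    unfolding EU_def by (rule sum.cong) (auto simp: commit_type_def)
  also have "\<dots> = (\<Sum>y\<in>Act i. x i y * (if y = astar i then 1 else 0))"
    by (rule EU_marginal[OF fin mp])
  also have "\<dots> = x i (astar i)"
    using fin ai by (simp add: if_distrib sum.delta' cong: if_cong)
  finally show ?thesis .
qed

lemma is_NE_commit_type_plays_pure:
  assumes fin: "\<And>i. finite (Act i)" and ne: "is_NE Act \<theta> x"
    and commit: "\<theta> i = commit_type Act astar i" and astar: "astar \<in> profiles Act"
  shows "x i = pure astar i"
proof -
  have ai: "astar i \<in> Act i" using astar by (auto simp: profiles_def)
  have mp: "mixed_profile Act x" using ne by (simp add: is_NE_def)
  have mp_dev: "mixed_profile Act (x(i := pure astar i))"
    using mp mixed_pure[OF astar fin] by (auto simp: mixed_profile_def)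
  have "EU Act (\<theta> i) (x(i := pure astar i)) \<le> EU Act (\<theta> i) x"
    using ne mixed_pure[OF astar fin] by (simp add: is_NE_def)
  hence "1 \<le> x i (astar i)"
    using EU_commit_type[where astar = astar, OF fin mp ai]
      EU_commit_type[where astar = astar, OF fin mp_dev ai] commit
    by (simp add: pure_def)
  moreover have mi: "mixed Act i (x i)" using mp by (simp add: mixed_profile_def)
  ultimately have "x i (astar i) = 1" using mixed_le_one[OF mi fin] by (meson antisym)
  thus ?thesis using mixed_eq_pure_if_one[where a = astar, OF mi fin ai] by blast
qed

lemma is_NE_commit_type_pure:
  assumes fin: "\<And>i. finite (Act i)" and astar: "astar \<in> profiles Act"
  shows "is_NE Act (commit_type Act astar) (pure astar)"
  unfolding is_NE_def
proof (intro conjI allI impI)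
  show mp: "mixed_profile Act (pure astar)" by (rule mixed_profile_pure[OF astar fin])
  fix i s assume s: "mixed Act i s"
  have ai: "astar i \<in> Act i" using astar by (auto simp: profiles_def)
  have mp_dev: "mixed_profile Act ((pure astar)(i := s))" using mp s by (auto simp: mixed_profile_def)
  show "EU Act (commit_type Act astar i) ((pure astar)(i := s)) \<le> EU Act (commit_type Act astar i) (pure astar)"
    using EU_commit_type[where astar = astar, OF fin mp_dev ai] EU_commit_type[where astar = astar, OF fin mp ai]
      mixed_le_one[OF s fin]
    by (simp add: pure_def)
qed

definition deviation_prob :: "('i::finite \<Rightarrow> 'a set) \<Rightarrow> ('i \<Rightarrow> 'a) \<Rightarrow> ('i \<Rightarrow> 'a \<Rightarrow> real) \<Rightarrow> real" where
  "deviation_prob Act astar x = (\<Sum>a\<in>profiles Act. (\<Prod>k\<in>UNIV. x k (a k)) * (if a = astar then 0 else 1))"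

lemma deviation_prob_nonneg: "mixed_profile Act x \<Longrightarrow> 0 \<le> deviation_prob Act astar x"
  unfolding deviation_prob_def by (intro sum_nonneg) (simp add: prod_mixed_nonneg)

lemma EU_loss_le_deviation_prob:
  assumes fin: "\<And>i. finite (Act i)" and mp: "mixed_profile Act x"
    and M: "\<And>a. a \<in> profiles Act \<Longrightarrow> u astar - u a \<le> M"
  shows "u astar - EU Act u x \<le> M * deviation_prob Act astar x"
proof -
  have "u astar - EU Act u x = (\<Sum>a\<in>profiles Act. (\<Prod>k\<in>UNIV. x k (a k)) * (u astar - u a))"
    by (rule EU_loss_eq[OF fin mp])
  also have "\<dots> \<le> (\<Sum>a\<in>profiles Act. M * ((\<Prod>k\<in>UNIV. x k (a k)) * (if a = astar then 0 else 1)))"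
  proof (rule sum_mono)
    fix a assume a: "a \<in> profiles Act"
    show "(\<Prod>k\<in>UNIV. x k (a k)) * (u astar - u a) \<le> M * ((\<Prod>k\<in>UNIV. x k (a k)) * (if a = astar then 0 else 1))"
      using mult_right_mono[OF M[OF a] prod_mixed_nonneg[OF mp, of a]] by (auto simp: mult.commute)
  qed
  also have "\<dots> = M * deviation_prob Act astar x" by (simp add: deviation_prob_def sum_distrib_left)
  finally show ?thesis .
qed

lemma coalition_EU_loss_ge_deviation_prob:
  assumes fin: "\<And>i. finite (Act i)" and mp: "mixed_profile Act x"
    and outside: "\<And>k. k \<notin> L \<Longrightarrow> x k = pure astar k"
    and gain: "\<And>a. a \<in> profiles Act \<Longrightarrow> a \<noteq> astar \<Longrightarrow> (\<forall>k. k \<notin> L \<longrightarrow> a k = astar k)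
        \<Longrightarrow> c \<le> (\<Sum>i\<in>L. \<pi> i astar - \<pi> i a)"
  shows "c * deviation_prob Act astar x \<le> (\<Sum>i\<in>L. \<pi> i astar - EU Act (\<pi> i) x)"
proof -
  have "c * deviation_prob Act astar x
      = (\<Sum>a\<in>profiles Act. (\<Prod>k\<in>UNIV. x k (a k)) * (c * (if a = astar then 0 else 1)))"
    by (simp add: deviation_prob_def sum_distrib_left mult_ac)
  also have "\<dots> \<le> (\<Sum>a\<in>profiles Act. (\<Prod>k\<in>UNIV. x k (a k)) * (\<Sum>i\<in>L. \<pi> i astar - \<pi> i a))"
  proof (rule sum_mono)
    fix a assume a: "a \<in> profiles Act"
    let ?p = "\<Prod>k\<in>UNIV. x k (a k)"
    show "?p * (c * (if a = astar then 0 else 1)) \<le> ?p * (\<Sum>i\<in>L. \<pi> i astar - \<pi> i a)"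
    proof (cases "a = astar \<or> ?p = 0")
      case False
      hence "x k (a k) \<noteq> 0" for k by auto
      hence "\<forall>k. k \<notin> L \<longrightarrow> a k = astar k"
        using outside by (metis pure_def)
      hence "c \<le> (\<Sum>i\<in>L. \<pi> i astar - \<pi> i a)" using gain a False by blast
      thus ?thesis using False prod_mixed_nonneg[OF mp, of a] by (simp add: mult_left_mono)
    next
      case True
      thus ?thesis
      proof
        assume "?p = 0"
        thus ?thesis by (simp only: mult_zero_left order_refl)
      qed simp
    qed
  qed
  also have "\<dots> = (\<Sum>i\<in>L. \<Sum>a\<in>profiles Act. (\<Prod>k\<in>UNIV. x k (a k)) * (\<pi> i astar - \<pi> i a))"
    by (simp add: sum_distrib_left sum.swap[of _ L])
  also have "\<dots> = (\<Sum>i\<in>L. \<pi> i astar - EU Act (\<pi> i) x)"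
    by (simp add: EU_loss_eq[OF fin mp])
  finally show ?thesis .
qed

lemma aggregate_strong_NE_pure_gain:
  assumes fin: "\<And>i. finite (Act i)" and astar: "astar \<in> profiles Act"
    and aSNE: "aggregate_strong_NE Act \<pi> (pure astar)"
    and a: "a \<in> profiles Act" "a \<noteq> astar" "\<forall>k. k \<notin> L \<longrightarrow> a k = astar k"
  shows "0 < (\<Sum>i\<in>L. \<pi> i astar - \<pi> i (a::'i::finite \<Rightarrow> 'a))"
proof -
  obtain k where k: "a k \<noteq> astar k" using a(2) by auto
  hence "k \<in> L" using a(3) by auto
  moreover have "pure a k \<noteq> pure astar k"
  proof
    assume "pure a k = pure astar k"
    hence "pure a k (a k) = pure astar k (a k)" by simp
    thus False using k by (simp add: pure_def)
  qed
  ultimately have deviates: "\<exists>j\<in>L. pure a j \<noteq> pure astar j" by blast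
  moreover have "\<forall>j\<in>L. mixed Act j (pure a j)" using mixed_pure[OF a(1) fin] by blast
  ultimately have "(\<Sum>j\<in>L. EU Act (\<pi> j) (pure astar))
      > (\<Sum>j\<in>L. EU Act (\<pi> j) (\<lambda>i. if i \<in> L then pure a i else pure astar i))"
    using aSNE unfolding aggregate_strong_NE_def by blast
  moreover have "(\<lambda>i. if i \<in> L then pure a i else pure astar i) = pure a"
    using a(3) by (auto simp: pure_def fun_eq_iff)
  ultimately have "(\<Sum>j\<in>L. EU Act (\<pi> j) (pure astar)) > (\<Sum>j\<in>L. EU Act (\<pi> j) (pure a))"
    by simp
  hence "(\<Sum>j\<in>L. \<pi> j astar) > (\<Sum>j\<in>L. \<pi> j a)"
    by (simp only: EU_pure[OF astar fin] EU_pure[OF a(1) fin])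
  thus ?thesis by (simp add: sum_subtractf)
qed

lemma aggregate_strong_NE_uniform_gain:
  fixes \<pi> :: "'i::finite \<Rightarrow> ('i \<Rightarrow> 'a) \<Rightarrow> real"
  assumes fin: "\<And>i. finite (Act i)" and astar: "astar \<in> profiles Act"
    and aSNE: "aggregate_strong_NE Act \<pi> (pure astar)"
  shows "\<exists>c>0. \<forall>L a. a \<in> profiles Act \<longrightarrow> a \<noteq> astar \<longrightarrow> (\<forall>k. k \<notin> L \<longrightarrow> a k = astar k)
           \<longrightarrow> c \<le> (\<Sum>i\<in>L. \<pi> i astar - \<pi> i a)"
proof -
  define G where "G = (\<lambda>(L,a). \<Sum>i\<in>L. \<pi> i astar - \<pi> i a) `
     {(L,a). a \<in> profiles Act \<and> a \<noteq> astar \<and> (\<forall>k. k \<notin> L \<longrightarrow> a k = astar k)}"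
  have "finite (UNIV \<times> profiles Act :: ('i set \<times> ('i \<Rightarrow> 'a)) set)"
    using finite_profiles[of Act, OF fin] by simp
  hence finG: "finite G" unfolding G_def by (rule finite_imageI[OF finite_subset, rotated]) auto
  have "0 < Min (insert 1 G)"
    using finG aggregate_strong_NE_pure_gain[OF fin astar aSNE] by (auto simp: G_def)
  moreover have "Min (insert 1 G) \<le> (\<Sum>i\<in>L. \<pi> i astar - \<pi> i a)"
    if "a \<in> profiles Act" "a \<noteq> astar" "\<forall>k. k \<notin> L \<longrightarrow> a k = astar k" for L a
  proof -
    have "(\<Sum>i\<in>L. \<pi> i astar - \<pi> i a) \<in> G" unfolding G_def using that by force
    thus ?thesis using finG by simp
  qed
  ultimately show ?thesis by blast
qed

lemma exists_loss_bound:
  fixes \<pi> :: "'i::finite \<Rightarrow> ('i \<Rightarrow> 'a) \<Rightarrow> real"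
  assumes fin: "\<And>i. finite (Act i)"
  shows "\<exists>M\<ge>0. \<forall>i a. a \<in> profiles Act \<longrightarrow> \<pi> i astar - \<pi> i a \<le> M"
proof (intro exI conjI allI impI)
  define M where "M = (\<Sum>i\<in>UNIV. \<Sum>a\<in>profiles Act. \<bar>\<pi> i astar - \<pi> i a\<bar>)"
  show "0 \<le> M" unfolding M_def by (intro sum_nonneg) auto
  fix i a assume a: "a \<in> profiles Act"
  have "\<pi> i astar - \<pi> i a \<le> \<bar>\<pi> i astar - \<pi> i a\<bar>" by (rule abs_ge_self)
  also have "\<dots> \<le> (\<Sum>a\<in>profiles Act. \<bar>\<pi> i astar - \<pi> i a\<bar>)"
    using a finite_profiles[of Act, OF fin] by (intro member_le_sum) auto
  also have "\<dots> \<le> M" unfolding M_def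
    by (rule member_le_sum[of i UNIV "\<lambda>i. \<Sum>a\<in>profiles Act. \<bar>\<pi> i astar - \<pi> i a\<bar>"])
       (auto intro: sum_nonneg)
  finally show "\<pi> i astar - \<pi> i a \<le> M" .
qed

section \<open>Random sets of mutants\<close>

text \<open>When role j \<in> J is filled by a mutant independently with probability e j, this is the
  probability that the mutants in a match occupy exactly the roles K \<inter> J.\<close>

definition mutant_set_prob :: "'i set \<Rightarrow> ('i \<Rightarrow> real) \<Rightarrow> 'i set \<Rightarrow> real" where
  "mutant_set_prob J e K = (\<Prod>j\<in>J. if j \<in> K then e j else 1 - e j)"

lemma mutant_set_prob_nonneg:
  assumes "\<And>j. j \<in> J \<Longrightarrow> 0 \<le> e j \<and> e j \<le> 1"
  shows "0 \<le> mutant_set_prob J e K"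
  unfolding mutant_set_prob_def using assms by (intro prod_nonneg) auto

lemma mutant_set_prob_remove:
  assumes "finite J" "i \<in> J"
  shows "mutant_set_prob J e K = (if i \<in> K then e i else 1 - e i) * mutant_set_prob (J - {i}) e K"
  unfolding mutant_set_prob_def
  using prod.remove[OF assms, of "\<lambda>j. if j \<in> K then e j else 1 - e j"] by simp

lemma mutant_set_prob_insert:
  assumes "finite J" "i \<in> J"
  shows "mutant_set_prob J e (insert i K) = e i * mutant_set_prob (J - {i}) e K"
proof -
  have "mutant_set_prob (J - {i}) e (insert i K) = mutant_set_prob (J - {i}) e K"
    unfolding mutant_set_prob_def by (intro prod.cong) auto
  thus ?thesis using mutant_set_prob_remove[OF assms, of e "insert i K"] by simp
qed

lemma sum_Pow_insert_reindex:
  assumes "finite J" "i \<in> J"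
  shows "(\<Sum>K\<in>Pow (J - {i}). F (insert i K)) = (\<Sum>L\<in>{L\<in>Pow J. i \<in> L}. F L)"
proof (rule sum.reindex_bij_witness[of _ "\<lambda>L. L - {i}" "insert i"])
qed (use assms in auto)

lemma weighted_marginal_loss_eq:
  assumes "finite J"
  shows "(\<Sum>i\<in>J. e i * (\<Sum>K\<in>Pow (J - {i}). mutant_set_prob (J - {i}) e K * (h i (insert i K) - h i K)))
      = (\<Sum>L\<in>Pow J. mutant_set_prob J e L * (\<Sum>i\<in>L. h i L))
        - (\<Sum>i\<in>J. \<Sum>K\<in>Pow (J - {i}). mutant_set_prob J e (insert i K) * h i K)"
proof -
  have "(\<Sum>i\<in>J. \<Sum>K\<in>Pow (J - {i}). mutant_set_prob J e (insert i K) * h i (insert i K))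
      = (\<Sum>i\<in>J. \<Sum>L\<in>{L\<in>Pow J. i \<in> L}. mutant_set_prob J e L * h i L)"
  proof (rule sum.cong[OF refl])
    fix i assume "i \<in> J"
    show "(\<Sum>K\<in>Pow (J - {i}). mutant_set_prob J e (insert i K) * h i (insert i K))
        = (\<Sum>L\<in>{L\<in>Pow J. i \<in> L}. mutant_set_prob J e L * h i L)"
      using sum_Pow_insert_reindex[OF assms \<open>i \<in> J\<close>, of "\<lambda>L. mutant_set_prob J e L * h i L"] .
  qed
  also have "\<dots> = (\<Sum>L\<in>Pow J. \<Sum>i\<in>{i\<in>J. i \<in> L}. mutant_set_prob J e L * h i L)"
    by (rule sum.swap_restrict) (use assms in auto)
  also have "\<dots> = (\<Sum>L\<in>Pow J. mutant_set_prob J e L * (\<Sum>i\<in>L. h i L))"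
  proof (rule sum.cong[OF refl])
    fix L assume "L \<in> Pow J"
    hence "{i\<in>J. i \<in> L} = L" by auto
    thus "(\<Sum>i\<in>{i\<in>J. i \<in> L}. mutant_set_prob J e L * h i L) = mutant_set_prob J e L * (\<Sum>i\<in>L. h i L)"
      by (simp add: sum_distrib_left)
  qed
  finally have "(\<Sum>i\<in>J. \<Sum>K\<in>Pow (J - {i}). mutant_set_prob J e (insert i K) * h i (insert i K))
      = (\<Sum>L\<in>Pow J. mutant_set_prob J e L * (\<Sum>i\<in>L. h i L))" .
  moreover have "(\<Sum>i\<in>J. e i * (\<Sum>K\<in>Pow (J - {i}). mutant_set_prob (J - {i}) e K * (h i (insert i K) - h i K)))
      = (\<Sum>i\<in>J. \<Sum>K\<in>Pow (J - {i}). mutant_set_prob J e (insert i K) * h i (insert i K))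
        - (\<Sum>i\<in>J. \<Sum>K\<in>Pow (J - {i}). mutant_set_prob J e (insert i K) * h i K)"
    using assms by (simp add: sum_distrib_left sum_subtractf right_diff_distrib
        mutant_set_prob_insert mult.assoc cong: sum.cong)
  ultimately show ?thesis by simp
qed

lemma mutant_set_prob_insert_le:
  assumes J: "finite J" and i: "i \<in> J" "i \<notin> K"
    and e: "\<And>j. j \<in> J \<Longrightarrow> 0 \<le> e j \<and> e j \<le> ebar" and ebar: "ebar \<le> 1/2"
  shows "mutant_set_prob J e (insert i K) \<le> 2 * ebar * mutant_set_prob J e K"
proof -
  have "\<And>j. j \<in> J \<Longrightarrow> 0 \<le> e j \<and> e j \<le> 1" using e ebar by fastforce
  hence "0 \<le> mutant_set_prob (J - {i}) e K" by (intro mutant_set_prob_nonneg) auto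
  moreover have "e i \<le> 2 * ebar * (1 - e i)"
    using e[OF i(1)] ebar mult_mono[of "e i" ebar "1 + 2 * ebar" 2] by (simp add: algebra_simps)
  ultimately have "e i * mutant_set_prob (J - {i}) e K \<le> 2 * ebar * ((1 - e i) * mutant_set_prob (J - {i}) e K)"
    by (simp add: mult_right_mono mult.assoc[symmetric])
  thus ?thesis using mutant_set_prob_insert[OF J i(1)] mutant_set_prob_remove[OF J i(1), of e K] i(2)
    by simp
qed

lemma weighted_marginal_loss_nonneg:
  fixes J :: "'i set" and e :: "'i \<Rightarrow> real" and h :: "'i \<Rightarrow> 'i set \<Rightarrow> real"
  assumes J: "finite J"
    and e: "\<And>j. j \<in> J \<Longrightarrow> 0 < e j \<and> e j < ebar" and ebar: "ebar \<le> 1/2"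
    and d: "\<And>K. K \<subseteq> J \<Longrightarrow> 0 \<le> d K"
    and upper: "\<And>i K. i \<in> J \<Longrightarrow> K \<subseteq> J \<Longrightarrow> h i K \<le> M * d K"
    and lower: "\<And>K. K \<subseteq> J \<Longrightarrow> c * d K \<le> (\<Sum>i\<in>K. h i K)"
    and M: "0 \<le> M" and small: "2 * real (card J) * M * ebar \<le> c"
  shows "0 \<le> (\<Sum>i\<in>J. e i * (\<Sum>K\<in>Pow (J - {i}). mutant_set_prob (J - {i}) e K * (h i (insert i K) - h i K)))"
proof -
  let ?q = "mutant_set_prob J e"
  define S where "S = (\<Sum>K\<in>Pow J. ?q K * d K)"
  have e01: "\<And>j. j \<in> J \<Longrightarrow> 0 \<le> e j \<and> e j \<le> 1" using e ebar by force
  have qd: "0 \<le> ?q K * d K" if "K \<subseteq> J" for K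
    using d[OF that] mutant_set_prob_nonneg[of J e, OF e01] by simp
  have "c * S = (\<Sum>L\<in>Pow J. ?q L * (c * d L))"
    by (simp add: S_def sum_distrib_left mult_ac)
  also have "\<dots> \<le> (\<Sum>L\<in>Pow J. ?q L * (\<Sum>i\<in>L. h i L))"
    using lower mutant_set_prob_nonneg[of J e, OF e01] by (intro sum_mono mult_left_mono) auto
  finally have first: "c * S \<le> (\<Sum>L\<in>Pow J. ?q L * (\<Sum>i\<in>L. h i L))" .
  have "(\<Sum>K\<in>Pow (J - {i}). ?q (insert i K) * h i K) \<le> 2 * ebar * M * S" if i: "i \<in> J" for i
  proof -
    have "(\<Sum>K\<in>Pow (J - {i}). ?q (insert i K) * h i K) \<le> (\<Sum>K\<in>Pow (J - {i}). 2 * ebar * M * (?q K * d K))"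
    proof (rule sum_mono)
      fix K assume "K \<in> Pow (J - {i})"
      hence K: "K \<subseteq> J" "i \<notin> K" by auto
      have "?q (insert i K) * h i K \<le> ?q (insert i K) * (M * d K)"
        using upper[OF i K(1)] mutant_set_prob_nonneg[of J e, OF e01] by (rule mult_left_mono)
      also have "\<dots> \<le> 2 * ebar * ?q K * (M * d K)"
        using mutant_set_prob_insert_le[OF J i K(2)] e ebar M d[OF K(1)]
        by (intro mult_right_mono) (auto simp: less_imp_le)
      finally show "?q (insert i K) * h i K \<le> 2 * ebar * M * (?q K * d K)" by (simp add: mult_ac)
    qed
    also have "\<dots> \<le> (\<Sum>K\<in>Pow J. 2 * ebar * M * (?q K * d K))"
      using J M e[OF i] qd by (intro sum_mono2) (auto intro!: mult_nonneg_nonneg)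
    also have "\<dots> = 2 * ebar * M * S" by (simp add: S_def sum_distrib_left)
    finally show ?thesis .
  qed
  hence "(\<Sum>i\<in>J. \<Sum>K\<in>Pow (J - {i}). ?q (insert i K) * h i K) \<le> real (card J) * (2 * ebar * M * S)"
    using sum_mono[of J _ "\<lambda>_. 2 * ebar * M * S"] by simp
  also have "\<dots> = (2 * real (card J) * M * ebar) * S" by simp
  also have "\<dots> \<le> c * S"
    using small qd unfolding S_def by (intro mult_right_mono sum_nonneg) auto
  finally show ?thesis using first weighted_marginal_loss_eq[OF J, of e h] by linarith
qed

section \<open>Fitness after entry into a monomorphic population\<close>

definition point_mass_pop :: "('i \<Rightarrow> 't) \<Rightarrow> 'i \<Rightarrow> 't \<Rightarrow> real" where
  "point_mass_pop th = (\<lambda>i t. if t = th i then 1 else 0)"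

definition mutant_profile :: "'i set \<Rightarrow> ('i \<Rightarrow> 't) \<Rightarrow> ('i \<Rightarrow> 't) \<Rightarrow> 'i \<Rightarrow> 't" where
  "mutant_profile K tm th = (\<lambda>j. if j \<in> K then tm j else th j)"

lemma supp_point_mass_pop: "supp (point_mass_pop th i) = {th i}"
  by (auto simp: supp_def point_mass_pop_def)

lemma supp_post_entry_point_mass:
  assumes "\<And>j. j \<in> J \<Longrightarrow> tm j \<noteq> th j" "\<And>j. j \<in> J \<Longrightarrow> 0 < eps j \<and> eps j < 1"
  shows "supp (post_entry (point_mass_pop th) J tm eps j) = (if j \<in> J then {th j, tm j} else {th j})"
  using assms[of j] by (auto simp: supp_def post_entry_def point_mass_pop_def)

lemma bij_betw_mutant_profiles:
  assumes tmth: "\<And>j. j \<in> J \<Longrightarrow> tm j \<noteq> th j" and S: "S \<subseteq> {i}"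
  shows "bij_betw (\<lambda>K. mutant_profile (K \<union> S) tm th) (Pow (J - {i}))
           (Pi\<^sub>E UNIV (\<lambda>j. if j = i then {mutant_profile S tm th i}
                           else if j \<in> J then {th j, tm j} else {th j}))"
proof (rule bij_betw_byWitness[where f' = "\<lambda>\<theta>. {j \<in> J - {i}. \<theta> j = tm j}"])
  show "\<forall>K\<in>Pow (J - {i}). {j \<in> J - {i}. mutant_profile (K \<union> S) tm th j = tm j} = K"
    using S by (auto simp: mutant_profile_def dest: tmth)
  show "\<forall>\<theta>\<in>Pi\<^sub>E UNIV (\<lambda>j. if j = i then {mutant_profile S tm th i}
                           else if j \<in> J then {th j, tm j} else {th j}).
          mutant_profile ({j \<in> J - {i}. \<theta> j = tm j} \<union> S) tm th = \<theta>"
  proof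
    fix \<theta> assume \<theta>: "\<theta> \<in> Pi\<^sub>E UNIV (\<lambda>j. if j = i then {mutant_profile S tm th i}
                           else if j \<in> J then {th j, tm j} else {th j})"
    show "mutant_profile ({j \<in> J - {i}. \<theta> j = tm j} \<union> S) tm th = \<theta>"
    proof
      fix j
      have "\<theta> j \<in> (if j = i then {mutant_profile S tm th i} else if j \<in> J then {th j, tm j} else {th j})"
        using \<theta> by (rule PiE_mem) simp
      thus "mutant_profile ({j \<in> J - {i}. \<theta> j = tm j} \<union> S) tm th j = \<theta> j"
        using S by (auto simp: mutant_profile_def split: if_splits)
    qed
  qed
qed (use S in \<open>auto simp: mutant_profile_def PiE_def extensional_def\<close>)

text \<open>S = {} gives the fitness of the incumbent in role i, S = {i} that of the mutant.\<close>

lemma fitness_post_entry_point_mass: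
  assumes tmth: "\<And>j. j \<in> J \<Longrightarrow> tm j \<noteq> th j"
    and eps: "\<And>j. j \<in> J \<Longrightarrow> 0 < eps j \<and> eps j < 1"
    and S: "S \<subseteq> {i}"
  shows "fitness Act \<pi> (post_entry (point_mass_pop th) J tm eps) b i (mutant_profile S tm th i)
    = (\<Sum>K\<in>Pow (J - {i}). mutant_set_prob (J - {i}) eps K * EU Act (\<pi> i) (b (mutant_profile (K \<union> S) tm th)))"
proof -
  define \<mu> where "\<mu> = post_entry (point_mass_pop th) J tm eps"
  have "Pi\<^sub>E UNIV (\<lambda>j. if j = i then {mutant_profile S tm th i} else supp (\<mu> j))
      = Pi\<^sub>E UNIV (\<lambda>j. if j = i then {mutant_profile S tm th i} else if j \<in> J then {th j, tm j} else {th j})"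
    unfolding \<mu>_def by (intro PiE_cong) (simp add: supp_post_entry_point_mass[OF tmth eps])
  hence bij: "bij_betw (\<lambda>K. mutant_profile (K \<union> S) tm th) (Pow (J - {i}))
              (Pi\<^sub>E UNIV (\<lambda>j. if j = i then {mutant_profile S tm th i} else supp (\<mu> j)))"
    using bij_betw_mutant_profiles[OF tmth S] by simp
  have weight: "(\<Prod>j\<in>UNIV - {i}. \<mu> j (mutant_profile (K \<union> S) tm th j)) = mutant_set_prob (J - {i}) eps K"
    if "K \<in> Pow (J - {i})" for K
  proof -
    have "(\<Prod>j\<in>UNIV - {i}. \<mu> j (mutant_profile (K \<union> S) tm th j))
        = (\<Prod>j\<in>UNIV - {i}. if j \<in> J then (if j \<in> K then eps j else 1 - eps j) else 1)"
      using that S unfolding \<mu>_def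
      by (intro prod.cong) (auto simp: mutant_profile_def post_entry_def point_mass_pop_def dest: tmth)
    also have "\<dots> = (\<Prod>j\<in>J - {i}. if j \<in> K then eps j else 1 - eps j)"
      by (rule prod.mono_neutral_cong_right) auto
    finally show ?thesis by (simp add: mutant_set_prob_def)
  qed
  have "(\<Sum>\<theta>\<in>Pi\<^sub>E UNIV (\<lambda>j. if j = i then {mutant_profile S tm th i} else supp (\<mu> j)).
          (\<Prod>j\<in>UNIV - {i}. \<mu> j (\<theta> j)) * EU Act (\<pi> i) (b \<theta>))
      = (\<Sum>K\<in>Pow (J - {i}). (\<Prod>j\<in>UNIV - {i}. \<mu> j (mutant_profile (K \<union> S) tm th j))
          * EU Act (\<pi> i) (b (mutant_profile (K \<union> S) tm th)))"
    by (rule sum.reindex_bij_betw[OF bij, symmetric])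
  also have "\<dots> = (\<Sum>K\<in>Pow (J - {i}). mutant_set_prob (J - {i}) eps K * EU Act (\<pi> i) (b (mutant_profile (K \<union> S) tm th)))"
    using weight by (intro sum.cong) auto
  finally show ?thesis unfolding fitness_def \<mu>_def[symmetric] .
qed

lemma fitness_gap_post_entry_point_mass:
  assumes tmth: "\<And>j. j \<in> J \<Longrightarrow> tm j \<noteq> th j"
    and eps: "\<And>j. j \<in> J \<Longrightarrow> 0 < eps j \<and> eps j < 1"
  shows "fitness Act \<pi> (post_entry (point_mass_pop th) J tm eps) b i (th i)
       - fitness Act \<pi> (post_entry (point_mass_pop th) J tm eps) b i (tm i)
    = (\<Sum>K\<in>Pow (J - {i}). mutant_set_prob (J - {i}) eps K *
         (EU Act (\<pi> i) (b (mutant_profile K tm th)) - EU Act (\<pi> i) (b (mutant_profile (insert i K) tm th))))"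
proof -
  have "fitness Act \<pi> (post_entry (point_mass_pop th) J tm eps) b i (mutant_profile S tm th i)
    = (\<Sum>K\<in>Pow (J - {i}). mutant_set_prob (J - {i}) eps K * EU Act (\<pi> i) (b (mutant_profile (K \<union> S) tm th)))"
    if "S \<subseteq> {i}" for S
    using tmth eps that by (rule fitness_post_entry_point_mass)
  from this[of "{}"] this[of "{i}"] show ?thesis
    by (simp add: mutant_profile_def sum_subtractf right_diff_distrib)
qed

section \<open>Stability of the commitment configuration\<close>

lemma nonneg_weighted_sum_cases:
  fixes D e :: "'i \<Rightarrow> real"
  assumes J: "finite J" and e: "\<And>j. j \<in> J \<Longrightarrow> 0 < e j" and S: "0 \<le> (\<Sum>j\<in>J. e j * D j)"
  shows "(\<exists>j\<in>J. 0 < D j) \<or> (\<forall>j\<in>J. D j = 0)"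
proof (cases "\<exists>j\<in>J. 0 < D j")
  case False
  hence nonpos: "\<And>j. j \<in> J \<Longrightarrow> 0 \<le> - (e j * D j)"
    using e by (simp add: mult_nonneg_nonpos less_imp_le not_less)
  have "(\<Sum>j\<in>J. - (e j * D j)) = 0"
    using S nonpos sum_nonneg[of J "\<lambda>j. - (e j * D j)"] by (simp add: sum_negf)
  hence "\<forall>j\<in>J. - (e j * D j) = 0" using sum_nonneg_eq_0_iff[OF J, of "\<lambda>j. - (e j * D j)"] nonpos by simp
  hence "\<forall>j\<in>J. D j = 0" using e by fastforce
  thus ?thesis ..
qed simp

lemma exists_small_share:
  fixes c M N :: real
  assumes c: "0 < c" and M: "0 \<le> M" and N: "0 \<le> N"
  obtains ebar where "0 < ebar" "ebar \<le> 1/2" "2 * N * M * ebar \<le> c"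
proof
  have D: "0 < c + 2 * N * M" using c M N by (simp add: add_pos_nonneg)
  show "0 < c / (2 * (c + 2 * N * M))" using c D by simp
  show "c / (2 * (c + 2 * N * M)) \<le> 1/2" using D M N by (simp add: field_simps)
  show "2 * N * M * (c / (2 * (c + 2 * N * M))) \<le> c" using D c M N by (simp add: field_simps)
qed

lemma suppP_point_mass_pop: "suppP (point_mass_pop th) = {th}"
  unfolding suppP_def supp_point_mass_pop by (auto simp: PiE_iff fun_eq_iff)

lemma balanced_point_mass_pop: "balanced Act \<pi> (point_mass_pop th) b"
  unfolding balanced_def supp_point_mass_pop by simp

lemma outcome_point_mass_pop_pure:
  "outcome (point_mass_pop th) (\<lambda>_. pure a) a' = (if a' = a then 1 else 0)"
  unfolding outcome_def suppP_point_mass_pop by (simp add: prod_pure point_mass_pop_def)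

lemma type_dist_point_mass_pop:
  assumes "th i \<in> Types Act"
  shows "type_dist Act (point_mass_pop th i)"
  unfolding type_dist_def supp_point_mass_pop using assms by (auto simp: point_mass_pop_def)

lemma configuration_commit_type:
  assumes fin: "\<And>i. finite (Act i)" and astar: "astar \<in> profiles Act"
  shows "configuration Act (point_mass_pop (commit_type Act astar)) (\<lambda>_. pure astar)"
  unfolding configuration_def pop_dist_def B1_def suppP_point_mass_pop
  using type_dist_point_mass_pop[OF commit_type_in_Types] is_NE_commit_type_pure[OF fin astar]
  by auto

lemma commit_type_post_entry_weighted_gap_nonneg:
  fixes Act :: "'i::finite \<Rightarrow> 'a set" and astar :: "'i \<Rightarrow> 'a"
    and \<pi> :: "'i \<Rightarrow> ('i \<Rightarrow> 'a) \<Rightarrow> real"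
  defines "th \<equiv> commit_type Act astar"
  assumes fin: "\<And>i. finite (Act i)" and astar: "astar \<in> profiles Act"
    and gain: "\<And>L a. a \<in> profiles Act \<Longrightarrow> a \<noteq> astar \<Longrightarrow> (\<forall>k. k \<notin> L \<longrightarrow> a k = astar k)
           \<Longrightarrow> c \<le> (\<Sum>i\<in>L. \<pi> i astar - \<pi> i a)"
    and M: "0 \<le> M" and loss: "\<And>i a. a \<in> profiles Act \<Longrightarrow> \<pi> i astar - \<pi> i a \<le> M"
    and ebar: "ebar \<le> 1/2" and small: "2 * real (card J) * M * ebar \<le> c"
    and eps: "\<And>j. j \<in> J \<Longrightarrow> 0 < eps j \<and> eps j < ebar"
    and tm: "\<And>j. j \<in> J \<Longrightarrow> tm j \<noteq> th j"
    and b: "B1 Act (post_entry (point_mass_pop th) J tm eps) b"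
  shows "0 \<le> (\<Sum>i\<in>J. eps i * (fitness Act \<pi> (post_entry (point_mass_pop th) J tm eps) b i (th i)
                             - fitness Act \<pi> (post_entry (point_mass_pop th) J tm eps) b i (tm i)))"
proof -
  define X where "X K = b (mutant_profile K tm th)" for K
  define h where "h i K = \<pi> i astar - EU Act (\<pi> i) (X K)" for i K
  have eps1: "\<And>j. j \<in> J \<Longrightarrow> 0 < eps j \<and> eps j < 1" using eps ebar by fastforce
  have NE: "is_NE Act (mutant_profile K tm th) (X K)" if "K \<subseteq> J" for K
  proof -
    have "mutant_profile K tm th \<in> suppP (post_entry (point_mass_pop th) J tm eps)"
      using that by (auto simp: suppP_def supp_post_entry_point_mass[OF tm eps1] mutant_profile_def)
    thus ?thesis using b unfolding B1_def X_def by blast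
  qed
  have mp: "mixed_profile Act (X K)" if "K \<subseteq> J" for K
    using NE[OF that] by (simp add: is_NE_def)
  have outside: "X K k = pure astar k" if "K \<subseteq> J" "k \<notin> K" for K k
    by (rule is_NE_commit_type_plays_pure[OF fin NE[OF that(1)] _ astar])
       (simp add: mutant_profile_def th_def that(2))
  have "0 \<le> (\<Sum>i\<in>J. eps i * (\<Sum>K\<in>Pow (J - {i}). mutant_set_prob (J - {i}) eps K * (h i (insert i K) - h i K)))"
  proof (rule weighted_marginal_loss_nonneg[where d = "\<lambda>K. deviation_prob Act astar (X K)"])
    show "h i K \<le> M * deviation_prob Act astar (X K)" if "K \<subseteq> J" for i K
      unfolding h_def by (rule EU_loss_le_deviation_prob[where u = "\<pi> i" and astar = astar, OF fin mp[OF that] loss])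
    show "c * deviation_prob Act astar (X K) \<le> (\<Sum>i\<in>K. h i K)" if "K \<subseteq> J" for K
      unfolding h_def by (rule coalition_EU_loss_ge_deviation_prob[where \<pi> = \<pi> and astar = astar,
          OF fin mp[OF that] outside[OF that] gain])
    show "0 \<le> deviation_prob Act astar (X K)" if "K \<subseteq> J" for K
      by (rule deviation_prob_nonneg[OF mp[OF that]])
    show "finite J" by simp
    show "\<And>j. j \<in> J \<Longrightarrow> 0 < eps j \<and> eps j < ebar" by (rule eps)
    show "ebar \<le> 1/2" "0 \<le> M" "2 * real (card J) * M * ebar \<le> c" by (fact ebar M small)+
  qed
  thus ?thesis
    using fitness_gap_post_entry_point_mass[where J = J and tm = tm and th = th and eps = eps, OF tm eps1]
    by (simp add: h_def X_def)
qed

lemma mutant_loses_or_balanced: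
  assumes gap: "0 \<le> (\<Sum>j\<in>J. eps j * (fitness Act \<pi> (post_entry (point_mass_pop th) J tm eps) b j (th j)
                                 - fitness Act \<pi> (post_entry (point_mass_pop th) J tm eps) b j (tm j)))"
    and tm: "\<And>j. j \<in> J \<Longrightarrow> tm j \<noteq> th j"
    and eps: "\<And>j. j \<in> J \<Longrightarrow> 0 < eps j \<and> eps j < 1"
  shows "(\<exists>j\<in>J. \<forall>t\<in>supp (point_mass_pop th j).
              fitness Act \<pi> (post_entry (point_mass_pop th) J tm eps) b j (tm j)
            < fitness Act \<pi> (post_entry (point_mass_pop th) J tm eps) b j t)
         \<or> balanced Act \<pi> (post_entry (point_mass_pop th) J tm eps) b"
proof -
  let ?\<mu> = "post_entry (point_mass_pop th) J tm eps"
  define D where "D j = fitness Act \<pi> ?\<mu> b j (th j) - fitness Act \<pi> ?\<mu> b j (tm j)" for j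
  have "(\<exists>j\<in>J. 0 < D j) \<or> (\<forall>j\<in>J. D j = 0)"
    using gap eps unfolding D_def by (intro nonneg_weighted_sum_cases) auto
  then consider (loses) j where "j \<in> J" "0 < D j" | (equal) "\<forall>j\<in>J. D j = 0" by blast
  thus ?thesis
  proof cases
    case loses
    thus ?thesis unfolding supp_point_mass_pop D_def by auto
  next
    case equal
    have "balanced Act \<pi> ?\<mu> b"
      unfolding balanced_def
    proof (intro allI ballI)
      fix i t t' assume "t \<in> supp (?\<mu> i)" and "t' \<in> supp (?\<mu> i)"
      thus "fitness Act \<pi> ?\<mu> b i t = fitness Act \<pi> ?\<mu> b i t'"
        using equal by (auto simp: supp_post_entry_point_mass[OF tm eps] D_def split: if_splits)
    qed
    thus ?thesis ..
  qed
qed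

lemma stable_commit_type:
  fixes \<pi> :: "'i::finite \<Rightarrow> ('i \<Rightarrow> 'a) \<Rightarrow> real"
  assumes fin: "\<And>i. finite (Act i)" and astar: "astar \<in> profiles Act"
    and aSNE: "aggregate_strong_NE Act \<pi> (pure astar)"
  shows "stable Act \<pi> (point_mass_pop (commit_type Act astar)) (\<lambda>_. pure astar)"
proof -
  let ?th = "commit_type Act astar"
  obtain c where c: "0 < c"
    and gain: "\<forall>L a. a \<in> profiles Act \<longrightarrow> a \<noteq> astar \<longrightarrow> (\<forall>k. k \<notin> L \<longrightarrow> a k = astar k)
           \<longrightarrow> c \<le> (\<Sum>i\<in>L. \<pi> i astar - \<pi> i a)"
    using aggregate_strong_NE_uniform_gain[OF fin astar aSNE] by blast
  obtain M where M: "0 \<le> M" and loss: "\<forall>i a. a \<in> profiles Act \<longrightarrow> \<pi> i astar - \<pi> i a \<le> M"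
    using exists_loss_bound[of Act, OF fin] by blast
  obtain ebar where ebar: "0 < ebar" "ebar \<le> 1/2"
    and small_UNIV: "2 * real (card (UNIV :: 'i set)) * M * ebar \<le> c"
    using exists_small_share[OF c M, of "real (card (UNIV :: 'i set))"] by auto
  have small: "2 * real (card J) * M * ebar \<le> c" for J :: "'i set"
    using small_UNIV card_mono[of UNIV J] M ebar(1)
    by (smt (verit) finite_UNIV mult_right_mono of_nat_mono subset_UNIV)
  show ?thesis unfolding stable_def
  proof (intro conjI allI impI exI[of _ ebar])
    fix J tm eps b'
    assume "J \<noteq> {} \<and> (\<forall>j\<in>J. tm j \<in> Types Act - supp (point_mass_pop ?th j))"
    hence tm: "\<And>j. j \<in> J \<Longrightarrow> tm j \<noteq> ?th j" by (auto simp: supp_point_mass_pop)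
    assume eps: "\<forall>j\<in>J. 0 < eps j \<and> eps j < ebar"
      and b': "B1 Act (post_entry (point_mass_pop ?th) J tm eps) b'
               \<and> (\<forall>\<theta>\<in>suppP (point_mass_pop ?th). b' \<theta> = pure astar)"
    have eps1: "\<And>j. j \<in> J \<Longrightarrow> 0 < eps j \<and> eps j < 1" using eps ebar by fastforce
    let ?\<mu> = "post_entry (point_mass_pop ?th) J tm eps"
    have "0 \<le> (\<Sum>j\<in>J. eps j * (fitness Act \<pi> ?\<mu> b' j (?th j) - fitness Act \<pi> ?\<mu> b' j (tm j)))"
      by (rule commit_type_post_entry_weighted_gap_nonneg[where Act = Act and astar = astar
            and c = c and M = M and ebar = ebar, OF fin astar])
         (use gain loss M ebar(2) small eps tm b' in auto)
    thus "(\<exists>j\<in>J. \<forall>t\<in>supp (point_mass_pop ?th j). fitness Act \<pi> ?\<mu> b' j (tm j) < fitness Act \<pi> ?\<mu> b' j t)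
          \<or> balanced Act \<pi> ?\<mu> b'"
      using tm eps1 by (rule mutant_loses_or_balanced)
  qed (use ebar balanced_point_mass_pop in auto)
qed

theorem mainTheorem5:
  fixes Act :: "'i::finite \<Rightarrow> 'a set"
    and \<pi> :: "'i \<Rightarrow> ('i \<Rightarrow> 'a) \<Rightarrow> real"
    and astar :: "'i \<Rightarrow> 'a"
  assumes fin: "\<And>i. finite (Act i)"
    and ne: "\<And>i. Act i \<noteq> {}"
    and astar_in: "astar \<in> profiles Act"
    and aSNE: "aggregate_strong_NE Act \<pi> (pure astar)"
  shows "\<exists>\<mu> b. configuration Act \<mu> b \<and> stable Act \<pi> \<mu> b \<and>
           (\<forall>a\<in>profiles Act. outcome \<mu> b a = (if a = astar then 1 else 0))"
  using configuration_commit_type[OF fin astar_in] stable_commit_type[OF fin astar_in aSNE]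
    outcome_point_mass_pop_pure by blast

end
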